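(* Let $\alpha\in[0,\infty)^n$ be non-increasing ($\alpha_1\ge\dots\ge\alpha_n$) and let $f\colon\mathcal{B}_n\to\mathcal{H}_d$ satisfy $\|f(x)-f(y)\|\le d_\alpha(x,y)$ for all $x,y\in\mathcal{B}_n$. Let $X$ be a $\mathcal{B}_n$-valued random vector satisfying the stochastic covering property. Let $\mathcal{F}_0$ be the trivial $\sigma$-field, $\mathcal{F}_l=\sigma(X_1,\dots,X_l)$ for $l\in[n]$, and $M_l=\mathbb{E}[f(X)\mid\mathcal{F}_l]-\mathbb{E}[f(X)\mid\mathcal{F}_{l-1}]$. Then for every $l\in[n]$, $M_l^2\preccurlyeq4\alpha_l^2I_d$.
   Context: $\mathcal{B}_n=\{0,1\}^n$, $\mathcal{H}_d$ the $d\times d$ Hermitian matrices, $\|\cdot\|$ operator norm, $\preccurlyeq$ positive semidefinite order, $I_d$ identity. $d_\alpha(x,y)=\sum_i\alpha_i\mathbf{1}\{x_i\ne y_i\}$. For $S\subset[n]$, $x_S=(x_i)_{i\in S}$; $x\triangleright y$ means $x=y$ or $x=y+e_i$ for some $i$. $X$ satisfies the stochastic covering property if for every $S\subset[n]$ and $x,y\in\mathcal{B}_n$ with $x_S\triangleright y_S$ there is a coupling $(U,V)$ of $\mathcal{L}(X_{S^c}\mid X_S=y_S)$ and $\mathcal{L}(X_{S^c}\mid X_S=x_S)$ with $U\triangleright V$ a.s. *)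

theory Defs
  imports "HOL-Analysis.Analysis" "HOL-Probability.Probability"
begin

text \<open>Points of the hypercube B_n are functions nat => bool that vanish
  (are False) outside the index set {0..<n}; coordinates are 0-based.\<close>

definition Bn :: "nat \<Rightarrow> (nat \<Rightarrow> bool) set" where
  "Bn n = {x. \<forall>i\<ge>n. \<not> x i}"

definition dist_alpha :: "nat \<Rightarrow> (nat \<Rightarrow> real) \<Rightarrow> (nat \<Rightarrow> bool) \<Rightarrow> (nat \<Rightarrow> bool) \<Rightarrow> real" where
  "dist_alpha n \<alpha> x y = (\<Sum>i<n. \<alpha> i * (if x i \<noteq> y i then 1 else 0))"

definition restr :: "nat set \<Rightarrow> (nat \<Rightarrow> bool) \<Rightarrow> (nat \<Rightarrow> bool)" where
  "restr S x = (\<lambda>i. if i \<in> S then x i else False)"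

definition covers :: "(nat \<Rightarrow> bool) \<Rightarrow> (nat \<Rightarrow> bool) \<Rightarrow> bool" where
  "covers x y \<longleftrightarrow> x = y \<or> (\<exists>i. \<not> y i \<and> x = y(i := True))"

definition cond_law :: "nat \<Rightarrow> (nat \<Rightarrow> bool) pmf \<Rightarrow> nat set \<Rightarrow> (nat \<Rightarrow> bool) \<Rightarrow> (nat \<Rightarrow> bool) pmf" where
  "cond_law n p S z = map_pmf (restr ({..<n} - S)) (cond_pmf p {w. restr S w = restr S z})"

definition stochastic_covering :: "nat \<Rightarrow> (nat \<Rightarrow> bool) pmf \<Rightarrow> bool" where
  "stochastic_covering n p \<longleftrightarrow>
     (\<forall>S x y. S \<subseteq> {..<n} \<longrightarrow> x \<in> Bn n \<longrightarrow> y \<in> Bn n \<longrightarrow>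
        covers (restr S x) (restr S y) \<longrightarrow>
        measure_pmf.prob p {w. restr S w = restr S x} > 0 \<longrightarrow>
        measure_pmf.prob p {w. restr S w = restr S y} > 0 \<longrightarrow>
        (\<exists>W :: ((nat \<Rightarrow> bool) \<times> (nat \<Rightarrow> bool)) pmf.
            map_pmf fst W = cond_law n p S y \<and>
            map_pmf snd W = cond_law n p S x \<and>
            (\<forall>(u, v) \<in> set_pmf W. covers u v)))"

definition hermitian :: "complex^'d^'d \<Rightarrow> bool" where
  "hermitian A \<longleftrightarrow> (\<forall>i j. A $ i $ j = cnj (A $ j $ i))"

definition quad_form :: "complex^'d^'d \<Rightarrow> complex^'d \<Rightarrow> complex" where
  "quad_form A v = (\<Sum>i\<in>UNIV. cnj (v $ i) * (A *v v) $ i)"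

definition psd :: "complex^'d^'d \<Rightarrow> bool" where
  "psd A \<longleftrightarrow> hermitian A \<and> (\<forall>v. Im (quad_form A v) = 0 \<and> 0 \<le> Re (quad_form A v))"

definition loewner_le :: "complex^'d^'d \<Rightarrow> complex^'d^'d \<Rightarrow> bool" where
  "loewner_le A B \<longleftrightarrow> psd (B - A)"

definition op_norm :: "complex^'d^'d \<Rightarrow> real" where
  "op_norm A = onorm (\<lambda>v. A *v v)"

text \<open>E[f(X) | F_l] evaluated at outcome x, where F_l = sigma(X_0,...,X_{l-1})
  (0-based coordinates); l = 0 gives the trivial sigma-field.\<close>
definition cond_exp :: "(nat \<Rightarrow> bool) pmf \<Rightarrow> ((nat \<Rightarrow> bool) \<Rightarrow> complex^'d^'d) \<Rightarrow> nat \<Rightarrow> (nat \<Rightarrow> bool) \<Rightarrow> complex^'d^'d" where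
  "cond_exp p f l x = measure_pmf.expectation (cond_pmf p {w. restr {..<l} w = restr {..<l} x}) f"

text \<open>Martingale difference M_{l+1} (paper indexing) at outcome x.\<close>
definition mart_diff :: "(nat \<Rightarrow> bool) pmf \<Rightarrow> ((nat \<Rightarrow> bool) \<Rightarrow> complex^'d^'d) \<Rightarrow> nat \<Rightarrow> (nat \<Rightarrow> bool) \<Rightarrow> complex^'d^'d" where
  "mart_diff p f l x = cond_exp p f (Suc l) x - cond_exp p f l x"

end

theory Submission
  imports Defs
begin

(* Conditioning additionally on X_l splits the event {X_i = x_i for i < l} into the events
   X_l = 1 and X_l = 0, so E[f(X) | F_(l-1)] is a convex combination of the two refined
   conditional expectations and M_l is a fraction of their difference. The stochastic covering
   property couples the conditional laws of the remaining coordinates given X_l = 1 and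
   given X_l = 0 so that they differ in at most one coordinate j > l; with the flipped coordinate l
   this bounds the difference of the two conditional expectations by alpha_l + alpha_j <= 2 alpha_l
   in operator norm. Finally a Hermitian M with operator norm at most c satisfies M^2 <= c^2 I. *)

lemma scaleR_matrix_vector_mult:
  "(r *\<^sub>R A) *v v = r *\<^sub>R (A *v v)" for A :: "'a::real_algebra_1^'n^'m"
  by (simp add: vec_eq_iff matrix_vector_mult_def scaleR_sum_right)

lemma sum_matrix_vector_mult:
  "(\<Sum>a\<in>F. g a) *v v = (\<Sum>a\<in>F. g a *v v)" for g :: "_ \<Rightarrow> 'a::semiring_1^'n^'m"
  by (induction F rule: infinite_finite_induct) (simp_all add: matrix_vector_mult_add_rdistrib)

lemma norm_matrix_vector_le_op_norm: "norm (A *v v) \<le> op_norm A * norm v"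
  unfolding op_norm_def by (rule onorm) simp

lemma op_norm_nonneg: "0 \<le> op_norm A"
  unfolding op_norm_def by (rule onorm_pos_le) simp

lemma op_norm_zero: "op_norm 0 = 0"
  by (simp add: op_norm_def onorm_zero)

lemma op_norm_scaleR: "op_norm (r *\<^sub>R A) = \<bar>r\<bar> * op_norm A"
  unfolding op_norm_def scaleR_matrix_vector_mult by (rule onorm_scaleR) simp

lemma op_norm_minus_commute: "op_norm (A - B) = op_norm (B - A)"
  using op_norm_scaleR[of "-1" "A - B"] by simp

lemma expectation_finite_support:
  fixes g :: "_ \<Rightarrow> 'b::{banach, second_countable_topology}"
  assumes "finite (set_pmf q)"
  shows "measure_pmf.expectation q g = (\<Sum>z\<in>set_pmf q. pmf q z *\<^sub>R g z)"
  by (rule integral_measure_pmf[OF assms]) auto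

lemma op_norm_expectation_le:
  assumes "finite (set_pmf q)" "\<And>z. z \<in> set_pmf q \<Longrightarrow> op_norm (g z) \<le> c"
  shows "op_norm (measure_pmf.expectation q g) \<le> c"
proof -
  have "op_norm (measure_pmf.expectation q g) = onorm (\<lambda>v. \<Sum>z\<in>set_pmf q. pmf q z *\<^sub>R (g z *v v))"
    by (simp add: op_norm_def expectation_finite_support[OF assms(1)]
        sum_matrix_vector_mult scaleR_matrix_vector_mult)
  also have "\<dots> \<le> (\<Sum>z\<in>set_pmf q. onorm (\<lambda>v. pmf q z *\<^sub>R (g z *v v)))"
    by (rule onorm_sum[OF assms(1)]) (simp add: bounded_linear_scaleR_right bounded_linear_compose)
  also have "\<dots> = (\<Sum>z\<in>set_pmf q. pmf q z * op_norm (g z))"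
    by (simp add: op_norm_def onorm_scaleR)
  also have "\<dots> \<le> (\<Sum>z\<in>set_pmf q. pmf q z * c)"
    by (intro sum_mono mult_left_mono assms(2)) simp_all
  also have "\<dots> = c"
    by (simp add: sum_distrib_right[symmetric] sum_pmf_eq_1[OF assms(1) order_refl])
  finally show ?thesis .
qed

lemma hermitian_cnj: "hermitian M \<Longrightarrow> cnj (M $ i $ j) = M $ j $ i"
  unfolding hermitian_def by (metis complex_cnj_cnj)

lemma hermitian_diff:
  assumes "hermitian A" "hermitian B"
  shows "hermitian (A - B)"
  unfolding hermitian_def by (simp add: hermitian_cnj[OF assms(1)] hermitian_cnj[OF assms(2)])

lemma hermitian_scaleR_mat_1: "hermitian ((r::real) *\<^sub>R mat 1)"
  unfolding hermitian_def by (simp add: mat_def)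

lemma hermitian_matrix_square:
  assumes "hermitian M"
  shows "hermitian (M ** M)"
  unfolding hermitian_def
  by (simp add: matrix_matrix_mult_def hermitian_cnj[OF assms] mult.commute)

lemma hermitian_expectation:
  assumes "finite (set_pmf q)" "\<And>z. z \<in> set_pmf q \<Longrightarrow> hermitian (g z)"
  shows "hermitian (measure_pmf.expectation q g)"
  unfolding hermitian_def expectation_finite_support[OF assms(1)]
  by (simp add: sum_component cnj_sum hermitian_cnj[OF assms(2)] cong: sum.cong)

lemma of_real_norm_power2_vec: "of_real (norm v ^ 2) = (\<Sum>i\<in>UNIV. cnj (v $ i) * v $ i)"
proof -
  have "norm v ^ 2 = (\<Sum>i\<in>UNIV. (cmod (v $ i))\<^sup>2)"
    by (simp add: norm_vec_def L2_set_def sum_nonneg)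
  then have "of_real (norm v ^ 2) = (\<Sum>i\<in>UNIV. (of_real (cmod (v $ i)))\<^sup>2 :: complex)"
    by simp
  also have "\<dots> = (\<Sum>i\<in>UNIV. cnj (v $ i) * v $ i)"
    by (rule sum.cong) (simp_all add: complex_norm_square[symmetric] mult.commute)
  finally show ?thesis .
qed

lemma hermitian_adjoint:
  assumes "hermitian M"
  shows "(\<Sum>i\<in>UNIV. cnj (v $ i) * (M *v w) $ i) = (\<Sum>j\<in>UNIV. cnj ((M *v v) $ j) * w $ j)"
proof -
  have "(\<Sum>i\<in>UNIV. cnj (v $ i) * (M *v w) $ i) = (\<Sum>i\<in>UNIV. \<Sum>j\<in>UNIV. cnj (v $ i) * M $ i $ j * w $ j)"
    by (simp add: matrix_vector_mult_def sum_distrib_left mult.assoc)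
  also have "\<dots> = (\<Sum>j\<in>UNIV. \<Sum>i\<in>UNIV. cnj (v $ i) * M $ i $ j * w $ j)"
    by (rule sum.swap)
  also have "\<dots> = (\<Sum>j\<in>UNIV. cnj ((M *v v) $ j) * w $ j)"
    by (simp add: matrix_vector_mult_def sum_distrib_left sum_distrib_right hermitian_cnj[OF assms] mult_ac)
  finally show ?thesis .
qed

lemma quad_form_diff: "quad_form (A - B) v = quad_form A v - quad_form B v"
  by (simp add: quad_form_def matrix_vector_mult_diff_rdistrib right_diff_distrib sum_subtractf)

lemma quad_form_scaleR_mat_1: "quad_form (r *\<^sub>R mat 1) v = of_real (r * norm v ^ 2)"
proof -
  have "quad_form (r *\<^sub>R mat 1) v = of_real r * (\<Sum>i\<in>UNIV. cnj (v $ i) * v $ i)"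
    unfolding quad_form_def scaleR_matrix_vector_mult matrix_vector_mul_lid vector_scaleR_component
    by (simp add: scaleR_conv_of_real sum_distrib_left mult_ac)
  then show ?thesis
    by (simp only: of_real_norm_power2_vec of_real_mult)
qed

lemma quad_form_hermitian_square:
  assumes "hermitian M"
  shows "quad_form (M ** M) v = of_real (norm (M *v v) ^ 2)"
  by (simp only: quad_form_def matrix_vector_mul_assoc[symmetric]
      hermitian_adjoint[OF assms, of v "M *v v"] of_real_norm_power2_vec)

lemma loewner_le_hermitian_square:
  assumes "hermitian M" "op_norm M \<le> c"
  shows "loewner_le (M ** M) (c\<^sup>2 *\<^sub>R mat 1)"
proof -
  have "norm (M *v v) \<le> c * norm v" for v
    using norm_matrix_vector_le_op_norm[of M v] assms(2) by (meson mult_right_mono norm_ge_zero order_trans)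
  then have "norm (M *v v) ^ 2 \<le> c\<^sup>2 * norm v ^ 2" for v
    by (metis norm_ge_zero power_mono power_mult_distrib)
  then show ?thesis
    unfolding loewner_le_def psd_def
    by (simp add: quad_form_diff quad_form_scaleR_mat_1 quad_form_hermitian_square assms(1)
        hermitian_diff hermitian_scaleR_mat_1 hermitian_matrix_square)
qed

lemma expectation_cond_pmf:
  fixes g :: "_ \<Rightarrow> 'b::{banach, second_countable_topology}"
  assumes "finite (set_pmf p)" "set_pmf p \<inter> A \<noteq> {}"
  shows "measure_pmf.expectation (cond_pmf p A) g
       = (1 / measure_pmf.prob p A) *\<^sub>R (\<Sum>w\<in>set_pmf p \<inter> A. pmf p w *\<^sub>R g w)"
  using assms by (simp add: expectation_finite_support pmf_cond scaleR_sum_right)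

lemma expectation_cond_pmf_Un:
  fixes g :: "_ \<Rightarrow> 'b::{banach, second_countable_topology}"
  assumes fin: "finite (set_pmf p)" and disj: "A \<inter> B = {}"
    and A: "set_pmf p \<inter> A \<noteq> {}" and B: "set_pmf p \<inter> B \<noteq> {}"
  defines "t \<equiv> measure_pmf.prob p A / measure_pmf.prob p (A \<union> B)"
  shows "measure_pmf.expectation (cond_pmf p (A \<union> B)) g
       = t *\<^sub>R measure_pmf.expectation (cond_pmf p A) g
         + (1 - t) *\<^sub>R measure_pmf.expectation (cond_pmf p B) g"
proof -
  have PA: "measure_pmf.prob p A > 0" and PB: "measure_pmf.prob p B > 0"
    using A B by (simp_all add: zero_less_measure_iff measure_pmf_zero_iff)
  have PUn: "measure_pmf.prob p (A \<union> B) = measure_pmf.prob p A + measure_pmf.prob p B"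
    using disj by (simp add: measure_pmf.finite_measure_Union)
  have "1 - t = measure_pmf.prob p B / measure_pmf.prob p (A \<union> B)"
    using PA PB unfolding t_def PUn by (simp add: field_simps)
  moreover have "set_pmf p \<inter> (A \<union> B) = (set_pmf p \<inter> A) \<union> (set_pmf p \<inter> B)"
    by blast
  ultimately show ?thesis
    using fin A B disj PA PB
    by (simp add: expectation_cond_pmf t_def sum.union_disjoint disjoint_iff scaleR_add_right)
qed

lemma cond_pmf_Un_null:
  assumes "set_pmf p \<inter> A \<noteq> {}" "set_pmf p \<inter> B = {}"
  shows "cond_pmf p (A \<union> B) = cond_pmf p A"
proof -
  have "measure_pmf.prob p (A \<union> B) = measure_pmf.prob p A"
    using assms(2) measure_pmf_zero_iff by (metis measure_pmf.measure_zero_union sets_measure_pmf UNIV_I)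
  moreover have "set_pmf p \<inter> (A \<union> B) \<noteq> {}"
    using assms(1) by blast
  ultimately show ?thesis
    using assms by (intro pmf_eqI) (auto simp: pmf_cond pmf_eq_0_set_pmf)
qed

(* cond_pmf p B is unspecified when B is p-null, so the gap bound is only assumed when both
   halves have positive probability. *)
lemma op_norm_cond_pmf_Un_deviation_le:
  fixes g :: "_ \<Rightarrow> complex^'d^'d"
  assumes fin: "finite (set_pmf p)" and disj: "A \<inter> B = {}"
    and C: "C \<in> {A, B}" "set_pmf p \<inter> C \<noteq> {}" and "0 \<le> c"
    and gap: "set_pmf p \<inter> A \<noteq> {} \<Longrightarrow> set_pmf p \<inter> B \<noteq> {} \<Longrightarrow>
      op_norm (measure_pmf.expectation (cond_pmf p A) g - measure_pmf.expectation (cond_pmf p B) g) \<le> c"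
  shows "op_norm (measure_pmf.expectation (cond_pmf p C) g - measure_pmf.expectation (cond_pmf p (A \<union> B)) g) \<le> c"
proof -
  define E where "E X = measure_pmf.expectation (cond_pmf p X) g" for X
  show ?thesis
  proof (cases "set_pmf p \<inter> A \<noteq> {} \<and> set_pmf p \<inter> B \<noteq> {}")
    case True
    define t where "t = measure_pmf.prob p A / measure_pmf.prob p (A \<union> B)"
    have t: "0 \<le> t" "t \<le> 1"
      unfolding t_def by (auto simp: divide_le_eq_1 zero_less_measure_iff measure_pmf.finite_measure_mono)
    have "E (A \<union> B) = t *\<^sub>R E A + (1 - t) *\<^sub>R E B"
      unfolding E_def t_def using True by (intro expectation_cond_pmf_Un[OF fin disj]) auto
    then have "E A - E (A \<union> B) = (1 - t) *\<^sub>R (E A - E B)" "E B - E (A \<union> B) = t *\<^sub>R (E B - E A)"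
      by (simp_all add: algebra_simps)
    then have "op_norm (E A - E (A \<union> B)) = (1 - t) * op_norm (E A - E B)"
      "op_norm (E B - E (A \<union> B)) = t * op_norm (E A - E B)"
      using t by (simp_all add: op_norm_scaleR op_norm_minus_commute[of "E B"])
    then have "op_norm (E C - E (A \<union> B)) \<le> op_norm (E A - E B)"
      using C t op_norm_nonneg[of "E A - E B"] by (auto simp: mult_left_le_one_le)
    then show ?thesis
      using gap True unfolding E_def by fastforce
  next
    case False
    then have "cond_pmf p (A \<union> B) = cond_pmf p C"
      using C cond_pmf_Un_null[of p A B] cond_pmf_Un_null[of p B A] by (auto simp: Un_commute)
    then show ?thesis
      using \<open>0 \<le> c\<close> by (simp add: op_norm_zero)
  qed
qed

abbreviation cylinder :: "nat set \<Rightarrow> (nat \<Rightarrow> bool) \<Rightarrow> (nat \<Rightarrow> bool) set" where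
  "cylinder S x \<equiv> {w. restr S w = restr S x}"

lemma restr_eq_iff: "restr S w = restr S z \<longleftrightarrow> (\<forall>i\<in>S. w i = z i)"
  unfolding restr_def fun_eq_iff by auto

lemma cylinder_lessThan_Suc_split:
  "cylinder {..<l} x = cylinder {..<Suc l} (x(l := True)) \<union> cylinder {..<Suc l} (x(l := False))"
proof (intro set_eqI iffI)
  fix w assume "w \<in> cylinder {..<l} x"
  then show "w \<in> cylinder {..<Suc l} (x(l := True)) \<union> cylinder {..<Suc l} (x(l := False))"
    by (cases "w l") (auto simp: restr_eq_iff less_Suc_eq)
qed (auto simp: restr_eq_iff)

lemma cylinder_lessThan_Suc_disjoint:
  "cylinder {..<Suc l} (x(l := True)) \<inter> cylinder {..<Suc l} (x(l := False)) = {}"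
  by (auto simp: restr_eq_iff)

lemma finite_Bn: "finite (Bn n)"
proof (rule finite_subset)
  show "Bn n \<subseteq> (\<lambda>S i. i \<in> S) ` Pow {..<n}"
  proof
    fix x assume "x \<in> Bn n"
    then have "x = (\<lambda>i. i \<in> {i. i < n \<and> x i})"
      unfolding Bn_def by (auto simp: fun_eq_iff not_le[symmetric])
    then show "x \<in> (\<lambda>S i. i \<in> S) ` Pow {..<n}" by blast
  qed
qed simp

lemma set_cond_law_subset: "set_pmf (cond_law n p S z) \<subseteq> {u \<in> Bn n. \<forall>i\<in>S. \<not> u i}"
  by (auto simp: cond_law_def restr_def Bn_def)

lemma expectation_cond_pmf_cylinder:
  fixes f :: "_ \<Rightarrow> 'b::{banach, second_countable_topology}"
  assumes "set_pmf p \<subseteq> Bn n" "set_pmf p \<inter> cylinder S z \<noteq> {}"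
  shows "measure_pmf.expectation (cond_pmf p (cylinder S z)) f
       = measure_pmf.expectation (cond_law n p S z) (\<lambda>u. f (\<lambda>i. restr S z i \<or> u i))"
proof -
  have "(\<lambda>i. restr S z i \<or> restr ({..<n} - S) w i) = w" if "w \<in> set_pmf (cond_pmf p (cylinder S z))" for w
  proof -
    have "w \<in> Bn n" "\<forall>i\<in>S. w i = z i"
      using that assms by (auto simp: restr_eq_iff)
    then show ?thesis
      by (auto simp: fun_eq_iff restr_def Bn_def)
  qed
  then show ?thesis
    unfolding cond_law_def integral_map_pmf by (intro integral_cong_AE) (auto simp: AE_measure_pmf_iff)
qed

lemma dist_alpha_two_coordinates_le:
  assumes alpha_nonneg: "\<And>i. i < n \<Longrightarrow> 0 \<le> \<alpha> i"
    and alpha_noninc: "\<And>i j. i \<le> j \<Longrightarrow> j < n \<Longrightarrow> \<alpha> j \<le> \<alpha> i"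
    and "l \<le> j" "j < n" "\<And>i. a i \<noteq> b i \<Longrightarrow> i = l \<or> i = j"
  shows "dist_alpha n \<alpha> a b \<le> 2 * \<alpha> l"
proof -
  have "dist_alpha n \<alpha> a b \<le> (\<Sum>i<n. (if i = l then \<alpha> i else 0) + (if i = j then \<alpha> i else 0))"
    unfolding dist_alpha_def
    by (intro sum_mono) (use alpha_nonneg assms(5) in fastforce)
  also have "\<dots> = \<alpha> l + \<alpha> j"
    using assms(3,4) by (simp add: sum.distrib)
  also have "\<dots> \<le> 2 * \<alpha> l"
    using alpha_noninc[OF assms(3,4)] by simp
  finally show ?thesis .
qed

lemma dist_alpha_flip_covering_le:
  assumes alpha_nonneg: "\<And>i. i < n \<Longrightarrow> 0 \<le> \<alpha> i"
    and alpha_noninc: "\<And>i j. i \<le> j \<Longrightarrow> j < n \<Longrightarrow> \<alpha> j \<le> \<alpha> i"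
    and "l < n" "covers u v" "u \<in> Bn n" "\<And>i. i \<le> l \<Longrightarrow> \<not> u i"
  shows "dist_alpha n \<alpha> (\<lambda>i. restr {..<Suc l} (x(l := True)) i \<or> v i)
           (\<lambda>i. restr {..<Suc l} (x(l := False)) i \<or> u i) \<le> 2 * \<alpha> l"
proof -
  obtain j where j: "l \<le> j" "j < n" and uv: "\<And>i. i \<noteq> j \<Longrightarrow> u i = v i"
  proof (cases "u = v")
    case True
    then show ?thesis using that[of l] \<open>l < n\<close> by simp
  next
    case False
    then obtain k where k: "u = v(k := True)"
      using \<open>covers u v\<close> unfolding covers_def by blast
    then have "u k"
      by simp
    then have "l < k" "k < n"
      using assms(5) assms(6)[of k] not_le unfolding Bn_def by blast+
    then show ?thesis using that[of k] k by simp
  qed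
  show ?thesis
  proof (rule dist_alpha_two_coordinates_le[OF alpha_nonneg alpha_noninc j])
    fix i
    assume differ: "(restr {..<Suc l} (x(l := True)) i \<or> v i) \<noteq> (restr {..<Suc l} (x(l := False)) i \<or> u i)"
    show "i = l \<or> i = j"
    proof (rule ccontr)
      assume "\<not> (i = l \<or> i = j)"
      then have "restr {..<Suc l} (x(l := True)) i = restr {..<Suc l} (x(l := False)) i" "u i = v i"
        using uv by (auto simp: restr_def)
      with differ show False
        by simp
    qed
  qed
qed

lemma op_norm_cond_pmf_flip_le:
  fixes f :: "(nat \<Rightarrow> bool) \<Rightarrow> complex^'d^'d"
  assumes alpha_nonneg: "\<And>i. i < n \<Longrightarrow> 0 \<le> \<alpha> i"
    and alpha_noninc: "\<And>i j. i \<le> j \<Longrightarrow> j < n \<Longrightarrow> \<alpha> j \<le> \<alpha> i"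
    and f_lip: "\<And>x y. x \<in> Bn n \<Longrightarrow> y \<in> Bn n \<Longrightarrow> op_norm (f x - f y) \<le> dist_alpha n \<alpha> x y"
    and X_range: "set_pmf p \<subseteq> Bn n" and SCP: "stochastic_covering n p"
    and "l < n" "x \<in> Bn n"
    and pos1: "set_pmf p \<inter> cylinder {..<Suc l} (x(l := True)) \<noteq> {}"
    and pos0: "set_pmf p \<inter> cylinder {..<Suc l} (x(l := False)) \<noteq> {}"
  shows "op_norm (measure_pmf.expectation (cond_pmf p (cylinder {..<Suc l} (x(l := True)))) f
                - measure_pmf.expectation (cond_pmf p (cylinder {..<Suc l} (x(l := False)))) f)
         \<le> 2 * \<alpha> l"
proof -
  define S where "S = {..<Suc l}"
  define x1 where "x1 = x(l := True)"
  define x0 where "x0 = x(l := False)"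
  have S: "S \<subseteq> {..<n}"
    using \<open>l < n\<close> by (auto simp: S_def)
  have x1: "x1 \<in> Bn n" and x0: "x0 \<in> Bn n"
    using \<open>x \<in> Bn n\<close> \<open>l < n\<close> by (auto simp: x1_def x0_def Bn_def)
  have cov: "covers (restr S x1) (restr S x0)"
    unfolding covers_def S_def x1_def x0_def by (auto simp: restr_def fun_eq_iff)
  have pos1': "set_pmf p \<inter> cylinder S x1 \<noteq> {}" and pos0': "set_pmf p \<inter> cylinder S x0 \<noteq> {}"
    using pos1 pos0 by (simp_all add: S_def x1_def x0_def)
  then have P1: "measure_pmf.prob p (cylinder S x1) > 0" and P0: "measure_pmf.prob p (cylinder S x0) > 0"
    by (simp_all add: zero_less_measure_iff measure_pmf_zero_iff)
  obtain W where W0: "map_pmf fst W = cond_law n p S x0"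
    and W1: "map_pmf snd W = cond_law n p S x1" and W_covers: "\<forall>(u, v) \<in> set_pmf W. covers u v"
    using SCP[unfolded stochastic_covering_def, rule_format, OF S x1 x0 cov P1 P0] by blast
  have W_range: "fst z \<in> Bn n \<and> (\<forall>i\<in>S. \<not> fst z i)" "snd z \<in> Bn n" if "z \<in> set_pmf W" for z
    using that set_cond_law_subset[of n p S x0] set_cond_law_subset[of n p S x1]
    unfolding W0[symmetric] W1[symmetric] by auto
  have W_finite: "finite (set_pmf W)"
    by (rule finite_subset[of _ "Bn n \<times> Bn n"]) (use W_range finite_Bn in auto)
  define F1 where "F1 z = f (\<lambda>i. restr S x1 i \<or> snd z i)" for z :: "(nat \<Rightarrow> bool) \<times> (nat \<Rightarrow> bool)"
  define F0 where "F0 z = f (\<lambda>i. restr S x0 i \<or> fst z i)" for z :: "(nat \<Rightarrow> bool) \<times> (nat \<Rightarrow> bool)"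
  have E1: "measure_pmf.expectation (cond_pmf p (cylinder S x1)) f = measure_pmf.expectation W F1"
    unfolding expectation_cond_pmf_cylinder[OF X_range pos1'] F1_def W1[symmetric] by simp
  have E0: "measure_pmf.expectation (cond_pmf p (cylinder S x0)) f = measure_pmf.expectation W F0"
    unfolding expectation_cond_pmf_cylinder[OF X_range pos0'] F0_def W0[symmetric] by simp
  have "op_norm (measure_pmf.expectation (cond_pmf p (cylinder S x1)) f
      - measure_pmf.expectation (cond_pmf p (cylinder S x0)) f)
      = op_norm (measure_pmf.expectation W (\<lambda>z. F1 z - F0 z))"
    unfolding E1 E0 by (simp add: integrable_measure_pmf_finite[OF W_finite])
  also have "\<dots> \<le> 2 * \<alpha> l"
  proof (rule op_norm_expectation_le[OF W_finite])
    fix z assume z: "z \<in> set_pmf W"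
    have "(\<lambda>i. restr S x1 i \<or> snd z i) \<in> Bn n" "(\<lambda>i. restr S x0 i \<or> fst z i) \<in> Bn n"
      using W_range[OF z] S by (auto simp: Bn_def restr_def)
    then have "op_norm (F1 z - F0 z) \<le> dist_alpha n \<alpha> (\<lambda>i. restr S x1 i \<or> snd z i) (\<lambda>i. restr S x0 i \<or> fst z i)"
      unfolding F1_def F0_def by (rule f_lip)
    also have "\<dots> \<le> 2 * \<alpha> l"
      unfolding S_def x1_def x0_def
    proof (rule dist_alpha_flip_covering_le[OF alpha_nonneg alpha_noninc \<open>l < n\<close>])
      show "covers (fst z) (snd z)"
        using W_covers z by auto
      show "fst z \<in> Bn n" "\<And>i. i \<le> l \<Longrightarrow> \<not> fst z i"
        using W_range[OF z] by (auto simp: S_def)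
    qed
    finally show "op_norm (F1 z - F0 z) \<le> 2 * \<alpha> l" .
  qed
  finally show ?thesis
    unfolding S_def x1_def x0_def .
qed

lemma hermitian_expectation_cond_pmf:
  assumes X_range: "set_pmf p \<subseteq> Bn n" and f_herm: "\<And>x. x \<in> Bn n \<Longrightarrow> hermitian (f x)"
    and "set_pmf p \<inter> C \<noteq> {}"
  shows "hermitian (measure_pmf.expectation (cond_pmf p C) f)"
proof (rule hermitian_expectation)
  have "set_pmf (cond_pmf p C) \<subseteq> Bn n"
    using X_range by (auto simp: set_cond_pmf[OF assms(3)])
  then show "finite (set_pmf (cond_pmf p C))" "\<And>z. z \<in> set_pmf (cond_pmf p C) \<Longrightarrow> hermitian (f z)"
    using finite_Bn finite_subset f_herm by auto
qed

lemma hermitian_mart_diff: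
  assumes X_range: "set_pmf p \<subseteq> Bn n" and f_herm: "\<And>x. x \<in> Bn n \<Longrightarrow> hermitian (f x)"
    and "x \<in> set_pmf p"
  shows "hermitian (mart_diff p f l x)"
  unfolding mart_diff_def cond_exp_def
  using assms(3) by (intro hermitian_diff hermitian_expectation_cond_pmf[OF X_range f_herm]) blast+

lemma op_norm_mart_diff_le:
  fixes f :: "(nat \<Rightarrow> bool) \<Rightarrow> complex^'d^'d"
  assumes alpha_nonneg: "\<And>i. i < n \<Longrightarrow> 0 \<le> \<alpha> i"
    and alpha_noninc: "\<And>i j. i \<le> j \<Longrightarrow> j < n \<Longrightarrow> \<alpha> j \<le> \<alpha> i"
    and f_lip: "\<And>x y. x \<in> Bn n \<Longrightarrow> y \<in> Bn n \<Longrightarrow> op_norm (f x - f y) \<le> dist_alpha n \<alpha> x y"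
    and X_range: "set_pmf p \<subseteq> Bn n" and SCP: "stochastic_covering n p"
    and l: "l < n" and x: "x \<in> set_pmf p"
  shows "op_norm (mart_diff p f l x) \<le> 2 * \<alpha> l"
proof -
  define A where "A = cylinder {..<Suc l} (x(l := True))"
  define B where "B = cylinder {..<Suc l} (x(l := False))"
  have fin: "finite (set_pmf p)"
    using X_range finite_Bn finite_subset by blast
  have AB: "cylinder {..<l} x = A \<union> B" "A \<inter> B = {}"
    unfolding A_def B_def by (rule cylinder_lessThan_Suc_split cylinder_lessThan_Suc_disjoint)+
  have C: "cylinder {..<Suc l} x \<in> {A, B}"
    unfolding A_def B_def by (cases "x l") (simp_all add: fun_upd_idem)
  have "op_norm (measure_pmf.expectation (cond_pmf p (cylinder {..<Suc l} x)) f
      - measure_pmf.expectation (cond_pmf p (A \<union> B)) f) \<le> 2 * \<alpha> l"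
  proof (rule op_norm_cond_pmf_Un_deviation_le[OF fin AB(2) C])
    show "set_pmf p \<inter> cylinder {..<Suc l} x \<noteq> {}"
      using x by blast
    show "0 \<le> 2 * \<alpha> l"
      using alpha_nonneg l by simp
    show "op_norm (measure_pmf.expectation (cond_pmf p A) f - measure_pmf.expectation (cond_pmf p B) f)
        \<le> 2 * \<alpha> l" if "set_pmf p \<inter> A \<noteq> {}" "set_pmf p \<inter> B \<noteq> {}"
      using that X_range x unfolding A_def B_def
      by (intro op_norm_cond_pmf_flip_le[OF alpha_nonneg alpha_noninc f_lip X_range SCP l]) auto
  qed
  then show ?thesis
    unfolding mart_diff_def cond_exp_def AB(1) .
qed

theorem lemma5p1:
  fixes n :: nat and \<alpha> :: "nat \<Rightarrow> real"
    and f :: "(nat \<Rightarrow> bool) \<Rightarrow> complex^'d^'d"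
    and p :: "(nat \<Rightarrow> bool) pmf"
  assumes alpha_nonneg: "\<And>i. i < n \<Longrightarrow> 0 \<le> \<alpha> i"
    and alpha_noninc: "\<And>i j. i \<le> j \<Longrightarrow> j < n \<Longrightarrow> \<alpha> j \<le> \<alpha> i"
    and f_herm: "\<And>x. x \<in> Bn n \<Longrightarrow> hermitian (f x)"
    and f_lip: "\<And>x y. x \<in> Bn n \<Longrightarrow> y \<in> Bn n \<Longrightarrow> op_norm (f x - f y) \<le> dist_alpha n \<alpha> x y"
    and X_range: "set_pmf p \<subseteq> Bn n"
    and SCP: "stochastic_covering n p"
    and l: "l < n"
  shows "\<forall>x \<in> set_pmf p.
           loewner_le (mart_diff p f l x ** mart_diff p f l x) ((4 * (\<alpha> l)\<^sup>2) *\<^sub>R mat 1)"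
proof
  fix x assume x: "x \<in> set_pmf p"
  have "hermitian (mart_diff p f l x)"
    by (rule hermitian_mart_diff[OF X_range f_herm x])
  moreover have "op_norm (mart_diff p f l x) \<le> 2 * \<alpha> l"
    by (rule op_norm_mart_diff_le[OF alpha_nonneg alpha_noninc f_lip X_range SCP l x])
  ultimately show "loewner_le (mart_diff p f l x ** mart_diff p f l x) ((4 * (\<alpha> l)\<^sup>2) *\<^sub>R mat 1)"
    using loewner_le_hermitian_square[of "mart_diff p f l x" "2 * \<alpha> l"] by (simp add: power_mult_distrib)
qed

end
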